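(* Let $\eta\in(0,1)$ and, for $N_S>0$ and $\xi\in[0,1]$, let $$I(\xi;N_S)=4N_S\left\{\frac{1-\xi}{1-2\eta^2\left(\sqrt{\xi N_S(1+\xi N_S)}-\xi N_S\right)}+\frac{\xi\left[(1-\eta^2)^2+\eta^4\right]}{(1-\eta^2)\left(1+2\xi N_S\eta^2(1-\eta^2)\right)}\right\}.$$ Let $f_1(\eta,N_S)=\frac{1}{4N_S}\,\partial_\xi I(\xi;N_S)\big|_{\xi=1}$. If $\eta>1/\sqrt2$, then $N_S\mapsto f_1(\eta,N_S)$ has exactly one zero $\bar N_S^{(0)}(\eta)$ on $(0,\infty)$. Define $\bar N_S(\eta)=0$ if $\eta\le 1/\sqrt2$ and $\bar N_S(\eta)=\bar N_S^{(0)}(\eta)$ if $\eta>1/\sqrt2$. Then, for every $N_S>0$, $\xi=1$ is a maximizer of $\xi\mapsto I(\xi;N_S)$ over $[0,1]$ if and only if $N_S\le\bar N_S(\eta)$.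
   Context: $I(\xi;N_S)$ is the quantum Fisher information for estimating the transmission $\eta$ of a pure-loss (zero-temperature, $N_B=0$) bosonic channel $a\mapsto\eta a+\sqrt{1-\eta^2}\,v$ ($v$ vacuum), using a single-mode pure displaced squeezed state with total mean photon number $N_S$, of which $\xi N_S$ photons are in squeezing and $(1-\xi)N_S$ in displacement (displacement along the optimal angle). $\xi=1$ is the squeezed-vacuum state, $\xi=0$ the coherent state. *)

theory Defs
  imports "HOL-Analysis.Analysis"
begin

definition QFI :: "real \<Rightarrow> real \<Rightarrow> real \<Rightarrow> real" where
  "QFI eta xi N = 4 * N *
     ((1 - xi) / (1 - 2 * eta^2 * (sqrt (xi * N * (1 + xi * N)) - xi * N))
      + xi * ((1 - eta^2)^2 + eta^4) / ((1 - eta^2) * (1 + 2 * xi * N * eta^2 * (1 - eta^2))))"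

definition f1 :: "real \<Rightarrow> real \<Rightarrow> real" where
  "f1 eta N = deriv (\<lambda>xi. QFI eta xi N) 1 / (4 * N)"

definition Nbar :: "real \<Rightarrow> real" where
  "Nbar eta = (if eta \<le> 1 / sqrt 2 then 0 else (THE N. N > 0 \<and> f1 eta N = 0))"

end

theory Submission
  imports Defs
begin

text \<open>
  Write e = eta^2, D = disp_gain e, k = sqz_gain e and a = sqz_saturation e. Then
  I(xi; N) = 4 N ((1 - xi) D(xi N) + xi k / (1 + a N xi)), where D is nondecreasing in the
  number xi N of squeezed photons, and I(1; N) - I(xi; N) = 4 N (1 - xi) b(xi) with
  b(xi) = k / ((1 + a N) (1 + a N xi)) - D(xi N). Since b is nonincreasing and continuous with
  b(1) = f_1(eta, N), xi = 1 is a maximizer exactly when f_1(eta, N) \<ge> 0. Finally f_1(eta, -)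
  is strictly decreasing, starts at f_1(eta, 0) = e (2e - 1) / (1 - e) and is negative at k / a,
  so it has a positive zero iff e > 1/2 and is nonnegative exactly up to that zero.
\<close>

definition sqz_gap :: "real \<Rightarrow> real" where
  "sqz_gap x = sqrt (x * (1 + x)) - x"

definition disp_gain :: "real \<Rightarrow> real \<Rightarrow> real" where
  "disp_gain e x = 1 / (1 - 2 * e * sqz_gap x)"

definition sqz_gain :: "real \<Rightarrow> real" where
  "sqz_gain e = ((1 - e)^2 + e^2) / (1 - e)"

definition sqz_saturation :: "real \<Rightarrow> real" where
  "sqz_saturation e = 2 * e * (1 - e)"

definition qfi_slope :: "real \<Rightarrow> real \<Rightarrow> real" where
  "qfi_slope e N = sqz_gain e / (1 + sqz_saturation e * N)^2 - disp_gain e N"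

lemma sqz_gap_nonneg: "0 \<le> x \<Longrightarrow> 0 \<le> sqz_gap x"
  unfolding sqz_gap_def using real_le_rsqrt[of x "x * (1 + x)"]
  by (simp add: power2_eq_square algebra_simps)

lemma sqz_gap_less_half: "0 \<le> x \<Longrightarrow> sqz_gap x < 1/2"
  unfolding sqz_gap_def using real_less_lsqrt[of "x + 1/2" "x * (1 + x)"]
  by (simp add: power2_eq_square algebra_simps)

lemma sqz_gap_mono:
  assumes "0 \<le> x" "x \<le> y"
  shows "sqz_gap x \<le> sqz_gap y"
proof -
  define u where "u = sqrt (x * (1 + x))"
  have u2: "u^2 = x * (1 + x)" unfolding u_def using assms by simp
  have "u \<le> x + 1/2" using sqz_gap_less_half[OF assms(1)] unfolding sqz_gap_def u_def by simp
  then have "2 * u * (y - x) \<le> (2 * x + 1) * (y - x)" using assms by (intro mult_right_mono) auto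
  then have "(u + (y - x))^2 \<le> y * (1 + y)" using u2 by (simp add: power2_eq_square algebra_simps)
  then have "u + (y - x) \<le> sqrt (y * (1 + y))" by (rule real_le_rsqrt)
  then show ?thesis unfolding sqz_gap_def u_def by simp
qed

lemma disp_gain_denom_pos:
  "0 \<le> e \<Longrightarrow> e \<le> 1 \<Longrightarrow> 0 \<le> x \<Longrightarrow> 0 < 1 - 2 * e * sqz_gap x"
  using sqz_gap_less_half[of x] mult_left_le_one_le[OF sqz_gap_nonneg, of x e] by linarith

lemma one_le_disp_gain:
  "0 \<le> e \<Longrightarrow> e \<le> 1 \<Longrightarrow> 0 \<le> x \<Longrightarrow> 1 \<le> disp_gain e x"
  unfolding disp_gain_def using disp_gain_denom_pos[of e x] sqz_gap_nonneg[of x]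
  by (simp add: le_divide_eq)

lemma disp_gain_mono:
  assumes "0 \<le> e" "e \<le> 1" "0 \<le> x" "x \<le> y"
  shows "disp_gain e x \<le> disp_gain e y"
  unfolding disp_gain_def
  using disp_gain_denom_pos[of e x] disp_gain_denom_pos[of e y] assms sqz_gap_mono[OF assms(3,4)]
  by (intro divide_left_mono mult_pos_pos) (auto intro: mult_left_mono)

lemma isCont_disp_gain:
  "0 \<le> e \<Longrightarrow> e \<le> 1 \<Longrightarrow> 0 \<le> x \<Longrightarrow> isCont (disp_gain e) x"
  unfolding disp_gain_def sqz_gap_def using disp_gain_denom_pos[of e x]
  by (intro continuous_intros) (simp_all add: sqz_gap_def)

lemma sqz_gain_pos: "0 < e \<Longrightarrow> e < 1 \<Longrightarrow> 0 < sqz_gain e"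
  unfolding sqz_gain_def by (simp add: add_pos_nonneg)

lemma sqz_saturation_pos: "0 < e \<Longrightarrow> e < 1 \<Longrightarrow> 0 < sqz_saturation e"
  unfolding sqz_saturation_def by simp

lemma qfi_slope_strict_decreasing:
  assumes e: "0 < e" "e < 1" and "0 \<le> x" "x < y"
  shows "qfi_slope e y < qfi_slope e x"
proof -
  have a: "0 < sqz_saturation e" using sqz_saturation_pos[OF e] .
  have x: "0 < 1 + sqz_saturation e * x" using a assms by (simp add: add_pos_nonneg)
  have xy: "1 + sqz_saturation e * x < 1 + sqz_saturation e * y" using a assms by simp
  then have "(1 + sqz_saturation e * x)^2 < (1 + sqz_saturation e * y)^2"
    using x by (intro power_strict_mono) auto
  then have "sqz_gain e / (1 + sqz_saturation e * y)^2 < sqz_gain e / (1 + sqz_saturation e * x)^2"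
    using sqz_gain_pos[OF e] x xy by (intro divide_strict_left_mono mult_pos_pos) auto
  moreover have "disp_gain e x \<le> disp_gain e y" using disp_gain_mono assms by simp
  ultimately show ?thesis unfolding qfi_slope_def by simp
qed

lemma qfi_slope_nonneg_iff:
  assumes "0 < e" "e < 1" "0 \<le> z" "qfi_slope e z = 0" "0 \<le> N"
  shows "0 \<le> qfi_slope e N \<longleftrightarrow> N \<le> z"
  using qfi_slope_strict_decreasing[of e N z] qfi_slope_strict_decreasing[of e z N] assms
  by (cases N z rule: linorder_cases) auto

lemma qfi_slope_zero_unique:
  assumes "0 < e" "e < 1" "0 \<le> x" "qfi_slope e x = 0" "0 \<le> y" "qfi_slope e y = 0"
  shows "x = y"
  using qfi_slope_nonneg_iff[of e x y] qfi_slope_nonneg_iff[of e y x] assms by simp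

lemma qfi_slope_0: "e \<noteq> 1 \<Longrightarrow> qfi_slope e 0 = e * (2 * e - 1) / (1 - e)"
  unfolding qfi_slope_def disp_gain_def sqz_gap_def sqz_gain_def
  by (simp add: field_simps power2_eq_square)

lemma qfi_slope_neg:
  assumes "0 < e" "e \<le> 1/2" "0 < N"
  shows "qfi_slope e N < 0"
proof -
  have "qfi_slope e N < qfi_slope e 0" using qfi_slope_strict_decreasing assms by simp
  also have "qfi_slope e 0 \<le> 0" using assms
    by (simp add: qfi_slope_0 divide_nonpos_pos mult_nonneg_nonpos)
  finally show ?thesis .
qed

lemma continuous_on_qfi_slope:
  assumes "0 < e" "e < 1"
  shows "continuous_on {0..} (qfi_slope e)"
proof -
  have "isCont (qfi_slope e) N" if "0 \<le> N" for N
  proof -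
    have "0 \<le> sqz_saturation e * N" using that sqz_saturation_pos[OF assms] by simp
    then show ?thesis unfolding qfi_slope_def using that assms
      by (intro continuous_intros isCont_disp_gain) auto
  qed
  then show ?thesis by (intro continuous_at_imp_continuous_on) auto
qed

lemma qfi_slope_has_pos_zero:
  assumes "1/2 < e" "e < 1"
  shows "\<exists>z > 0. qfi_slope e z = 0"
proof -
  have e: "0 < e" using assms by simp
  define k where "k = sqz_gain e"
  define M where "M = k / sqz_saturation e"
  have k: "0 < k" unfolding k_def using sqz_gain_pos[OF e assms(2)] .
  have M: "0 \<le> M" "1 + sqz_saturation e * M = 1 + k"
    unfolding M_def using k sqz_saturation_pos[OF e assms(2)] by auto
  have start: "0 < qfi_slope e 0" using assms by (simp add: qfi_slope_0)
  have "k < (1 + k)^2" using k by (simp add: power2_eq_square algebra_simps add_pos_pos)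
  then have "k / (1 + k)^2 < 1" using k by simp
  then have "qfi_slope e M < 0"
    unfolding qfi_slope_def M(2) k_def[symmetric] using one_le_disp_gain[of e M] e assms M by simp
  then obtain z where z: "0 \<le> z" "z \<le> M" "qfi_slope e z = 0"
    using IVT2'[of "qfi_slope e" M 0 0] start M
      continuous_on_subset[OF continuous_on_qfi_slope[OF e assms(2)]] by fastforce
  then show ?thesis using start by (intro exI[of _ z]) (auto simp: order.order_iff_strict)
qed

lemma QFI_eq:
  "QFI eta xi N = 4 * N * ((1 - xi) * disp_gain (eta^2) (xi * N)
     + xi * sqz_gain (eta^2) / (1 + sqz_saturation (eta^2) * N * xi))"
  unfolding QFI_def disp_gain_def sqz_gap_def sqz_gain_def sqz_saturation_def
  by (simp add: algebra_simps flip: power_mult)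

lemma DERIV_diff_mult_isCont:
  fixes h :: "real \<Rightarrow> real"
  assumes "isCont h a"
  shows "((\<lambda>t. (a - t) * h t) has_real_derivative - h a) (at a)"
  unfolding CARAT_DERIV
  by (intro exI[of _ "\<lambda>t. - h t"]) (auto simp: algebra_simps intro: continuous_intros assms)

lemma f1_eq_qfi_slope:
  assumes "0 < eta" "eta < 1" "0 < N"
  shows "f1 eta N = qfi_slope (eta^2) N"
proof -
  define e where "e = eta^2"
  have e: "0 < e" "e < 1" using assms by (auto simp: e_def power_less_one_iff)
  define k where "k = sqz_gain e"
  define a where "a = sqz_saturation e"
  have pos: "0 < 1 + a * N" using sqz_saturation_pos[OF e] assms by (simp add: a_def add_pos_pos)
  have "isCont (\<lambda>xi. disp_gain e (xi * N)) 1"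
    using e assms by (intro isCont_o2[OF _ isCont_disp_gain] continuous_intros) auto
  then have disp: "((\<lambda>xi. (1 - xi) * disp_gain e (xi * N)) has_real_derivative - disp_gain e N) (at 1)"
    using DERIV_diff_mult_isCont by fastforce
  have "((\<lambda>xi. xi * k / (1 + a * N * xi)) has_real_derivative
          (k * (1 + a * N) - k * (a * N)) / (1 + a * N)^2) (at 1)"
    using pos by (auto intro!: derivative_eq_intros simp: power2_eq_square)
  then have sqz: "((\<lambda>xi. xi * k / (1 + a * N * xi)) has_real_derivative k / (1 + a * N)^2) (at 1)"
    by (simp add: algebra_simps)
  have "((\<lambda>xi. QFI eta xi N) has_real_derivative 4 * N * qfi_slope e N) (at 1)"
    unfolding QFI_eq e_def[symmetric] k_def[symmetric] a_def[symmetric] qfi_slope_def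
    using DERIV_cmult[OF DERIV_add[OF disp sqz], of "4 * N"] by (simp add: algebra_simps)
  then show ?thesis unfolding f1_def e_def using assms by (simp add: DERIV_imp_deriv)
qed

lemma QFI_1_minus_QFI:
  assumes "0 < eta" "eta < 1" "0 \<le> N" "0 \<le> xi"
  shows "QFI eta 1 N - QFI eta xi N = 4 * N * (1 - xi) *
    (sqz_gain (eta^2) / ((1 + sqz_saturation (eta^2) * N) * (1 + sqz_saturation (eta^2) * N * xi))
      - disp_gain (eta^2) (xi * N))"
proof -
  have e: "0 < eta^2" "eta^2 < 1" using assms by (auto simp: power_less_one_iff)
  define k where "k = sqz_gain (eta^2)"
  define a where "a = sqz_saturation (eta^2)"
  have "0 \<le> a * N" "0 \<le> a * N * xi" using sqz_saturation_pos[OF e] assms by (simp_all add: a_def)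
  then have "1 + a * N \<noteq> 0" "1 + a * N * xi \<noteq> 0" by linarith+
  then have "k / (1 + a * N) - xi * k / (1 + a * N * xi) = (1 - xi) * (k / ((1 + a * N) * (1 + a * N * xi)))"
    by (simp add: field_simps)
  then show ?thesis unfolding QFI_eq k_def[symmetric] a_def[symmetric] by (simp add: algebra_simps)
qed

lemma QFI_max_at_1_iff:
  assumes "0 < eta" "eta < 1" "0 < N"
  shows "(\<forall>xi \<in> {0..1}. QFI eta xi N \<le> QFI eta 1 N) \<longleftrightarrow> 0 \<le> qfi_slope (eta^2) N"
proof -
  define e where "e = eta^2"
  have e: "0 < e" "e < 1" using assms by (auto simp: e_def power_less_one_iff)
  define k where "k = sqz_gain e"
  define a where "a = sqz_saturation e"
  define b where "b xi = k / ((1 + a * N) * (1 + a * N * xi)) - disp_gain e (xi * N)" for xi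
  have ak_pos: "0 < a" "0 < k" using e by (simp_all add: a_def k_def sqz_saturation_pos sqz_gain_pos)
  have gap: "QFI eta 1 N - QFI eta xi N = 4 * N * (1 - xi) * b xi" if "0 \<le> xi" for xi
    using QFI_1_minus_QFI[of eta N xi] assms that by (simp add: b_def k_def a_def e_def)
  have b_ge: "qfi_slope e N \<le> b xi" if "xi \<in> {0..1}" for xi
  proof -
    have "1 + a * N * xi \<le> 1 + a * N" "0 < 1 + a * N * xi" "0 < 1 + a * N"
      using that ak_pos assms by (auto simp: mult_left_le add_pos_nonneg)
    then have "k / (1 + a * N)^2 \<le> k / ((1 + a * N) * (1 + a * N * xi))"
      unfolding power2_eq_square using ak_pos by (intro divide_left_mono mult_left_mono mult_pos_pos) auto
    moreover have "disp_gain e (xi * N) \<le> disp_gain e N"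
      using that e assms by (intro disp_gain_mono) (auto simp: mult_left_le_one_le)
    ultimately show ?thesis unfolding qfi_slope_def b_def k_def a_def by simp
  qed
  have "0 < a * N" using ak_pos assms by simp
  then have "isCont b 1"
    unfolding b_def using e assms by (intro continuous_intros isCont_o2[OF _ isCont_disp_gain]) auto
  then have b_lim: "(b \<longlongrightarrow> qfi_slope e N) (at_left 1)"
    by (simp add: isCont_def filterlim_at_split b_def qfi_slope_def k_def a_def power2_eq_square)
  show ?thesis
    unfolding e_def[symmetric]
  proof
    assume max: "\<forall>xi \<in> {0..1}. QFI eta xi N \<le> QFI eta 1 N"
    have "\<forall>\<^sub>F xi in at_left 1. xi \<in> {0<..<(1::real)}" by (rule eventually_at_left_real) simp
    then have "\<forall>\<^sub>F xi in at_left 1. 0 \<le> b xi"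
    proof eventually_elim
      case (elim xi)
      then have "QFI eta xi N \<le> QFI eta 1 N" using max by simp
      moreover have "QFI eta 1 N - QFI eta xi N = 4 * N * (1 - xi) * b xi" using gap elim by simp
      ultimately have "0 \<le> 4 * N * (1 - xi) * b xi" by linarith
      moreover have "0 < 4 * N * (1 - xi)" using elim assms by simp
      ultimately show ?case by (metis mult_le_cancel_left_pos mult_zero_right)
    qed
    then show "0 \<le> qfi_slope e N" using tendsto_lowerbound[OF b_lim] by simp
  next
    assume "0 \<le> qfi_slope e N"
    then have "0 \<le> 4 * N * (1 - xi) * b xi" if "xi \<in> {0..1}" for xi
      using b_ge[OF that] that assms by simp
    then show "\<forall>xi \<in> {0..1}. QFI eta xi N \<le> QFI eta 1 N"
      using gap by (metis atLeastAtMost_iff diff_ge_0_iff_ge)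
  qed
qed

lemma inverse_sqrt2_less_iff: "0 < eta \<Longrightarrow> 1 / sqrt 2 < eta \<longleftrightarrow> 1/2 < eta^2"
  by (metis real_sqrt_divide real_sqrt_less_iff real_sqrt_one real_sqrt_abs abs_of_pos)

theorem proposition1:
  fixes eta :: real
  assumes "0 < eta" and "eta < 1"
  shows "(eta > 1 / sqrt 2 \<longrightarrow> (\<exists>!N. N > 0 \<and> f1 eta N = 0))
         \<and> (\<forall>N > 0. (\<forall>xi \<in> {0..1}. QFI eta xi N \<le> QFI eta 1 N) \<longleftrightarrow> N \<le> Nbar eta)"
proof -
  define e where "e = eta^2"
  have e: "0 < e" "e < 1" using assms by (auto simp: e_def power_less_one_iff)
  have f1: "N > 0 \<and> f1 eta N = 0 \<longleftrightarrow> N > 0 \<and> qfi_slope e N = 0" for N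
    using f1_eq_qfi_slope assms unfolding e_def by auto
  have max: "(\<forall>xi \<in> {0..1}. QFI eta xi N \<le> QFI eta 1 N) \<longleftrightarrow> 0 \<le> qfi_slope e N" if "N > 0" for N
    using QFI_max_at_1_iff assms that unfolding e_def by simp
  show ?thesis
  proof (cases "1/2 < e")
    case False
    then have "\<not> 1 / sqrt 2 < eta" using inverse_sqrt2_less_iff assms by (simp add: e_def)
    moreover have "\<not> 0 \<le> qfi_slope e N" if "N > 0" for N
      using qfi_slope_neg[of e N] e False that by simp
    ultimately show ?thesis using max by (simp add: Nbar_def)
  next
    case True
    then obtain z where z: "0 < z" "qfi_slope e z = 0" using qfi_slope_has_pos_zero e by blast
    have zero_iff: "N > 0 \<and> f1 eta N = 0 \<longleftrightarrow> N = z" for N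
      using f1[of N] z qfi_slope_zero_unique[of e N z] e by auto
    have "1 / sqrt 2 < eta" using inverse_sqrt2_less_iff assms True by (simp add: e_def)
    then have "Nbar eta = z" by (simp add: Nbar_def zero_iff)
    moreover have "0 \<le> qfi_slope e N \<longleftrightarrow> N \<le> z" if "N > 0" for N
      using qfi_slope_nonneg_iff[of e z N] e z that by simp
    ultimately show ?thesis using zero_iff max \<open>1 / sqrt 2 < eta\<close> by simp
  qed
qed

end
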